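(* For every nonempty graph $G$, the limit $\hat r_\infty(G)=\lim_{t\to\infty}\frac{\hat r(tK_2,G)}{t\,\hat r(K_2,G)}$ exists and \[\hat r_{\infty}(G)=\inf_{t\ge 1}\frac{\hat r(tK_2,G)}{t|E(G)|}.\] Moreover, $0\le \hat r_\infty(G)\le 1$, and $\hat r_\infty(G)=1$ if and only if $\hat r(tK_2,G)=t|E(G)|$ for every $t\ge 1$. In particular, for every integer $t\ge1$, $\hat r_\infty(G)\le \frac{\hat r(tK_2,G)}{t|E(G)|}$.
   Context: All graphs are finite and simple; a graph is nonempty if it has at least one edge. $tK_2$ denotes a matching with $t$ edges. For graphs $F,G,H$, $F\to(G,H)$ means every red--blue coloring of $E(F)$ contains a red copy of $G$ or a blue copy of $H$, and $\hat r(G,H)=\min\{|E(F)|:F\to(G,H)\}$. *)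

theory Defs
  imports Complex_Main
begin

text \<open>A finite simple graph is represented by its (finite) edge set; every edge is a
  2-element set of vertices. Isolated vertices are irrelevant for containment of copies
  and for size Ramsey numbers.\<close>

definition simple_graph :: "'a set set \<Rightarrow> bool" where
  "simple_graph E \<longleftrightarrow> finite E \<and> (\<forall>e\<in>E. card e = 2)"

definition has_copy :: "'a set set \<Rightarrow> 'b set set \<Rightarrow> bool" where
  "has_copy G H \<longleftrightarrow> (\<exists>f. inj_on f (\<Union>G) \<and> (\<forall>e\<in>G. f ` e \<in> H))"

definition arrows :: "nat set set \<Rightarrow> 'a set set \<Rightarrow> 'b set set \<Rightarrow> bool" where
  "arrows F G H \<longleftrightarrow> (\<forall>R\<subseteq>F. has_copy G R \<or> has_copy H (F - R))"

text \<open>Size Ramsey number (host graphs on vertex type nat, w.l.o.g.).\<close>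
definition size_ramsey :: "'a set set \<Rightarrow> 'b set set \<Rightarrow> nat" where
  "size_ramsey G H = (LEAST m. \<exists>F. simple_graph F \<and> card F = m \<and> arrows F G H)"

definition matching :: "nat \<Rightarrow> nat set set" where
  "matching t = {{2*i, 2*i+1} | i. i < t}"

end

theory Submission
  imports Defs
begin

(* Write r(t) for the size Ramsey number of (tK_2, G). Placing an arrowing graph for (sK_2, G)
   next to a vertex-disjoint one for (tK_2, G) gives an arrowing graph for ((s+t)K_2, G): a
   colouring without a blue G has a red sK_2 in the first part and a red tK_2 in the second, which
   together form a red (s+t)K_2. So r is subadditive, and Fekete's lemma makes r(t) / t converge
   to its infimum. Colouring nothing red shows that F arrows (K_2, G) exactly when F contains G,
   so r(1) = |E(G)|; subadditivity then gives r(t) \<le> t |E(G)|, whence the upper bound 1 and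
   the characterisation of equality. *)

lemma has_copy_mono: "has_copy G H \<Longrightarrow> H \<subseteq> H' \<Longrightarrow> has_copy G H'"
  unfolding has_copy_def by blast

lemma has_copy_image:
  assumes "has_copy G H" "inj h"
  shows "has_copy G ((`) h ` H)"
proof -
  obtain f where f: "inj_on f (\<Union>G)" "\<forall>e\<in>G. f ` e \<in> H"
    using assms(1) unfolding has_copy_def by blast
  have "inj_on (h \<circ> f) (\<Union>G)" using f(1) assms(2) by (simp add: comp_inj_on inj_on_subset)
  moreover have "\<forall>e\<in>G. (h \<circ> f) ` e \<in> (`) h ` H" using f(2) by (metis image_comp imageI)
  ultimately show ?thesis unfolding has_copy_def by blast
qed

lemma has_copy_of_image:
  assumes "has_copy G H" "inj h"
  shows "has_copy ((`) h ` G) H"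
proof -
  obtain f where f: "inj_on f (\<Union>G)" "\<forall>e\<in>G. f ` e \<in> H"
    using assms(1) unfolding has_copy_def by blast
  have "inj_on (inv h) (h ` \<Union>G)" by (rule inj_on_inv_into) blast
  moreover have "inv h ` h ` \<Union>G = \<Union>G" using assms(2) by (rule image_inv_f_f)
  ultimately have "inj_on (f \<circ> inv h) (\<Union>((`) h ` G))"
    using f(1) by (metis comp_inj_on image_Union)
  moreover have "\<forall>e\<in>(`) h ` G. (f \<circ> inv h) ` e \<in> H"
    using f(2) assms(2) by (simp add: image_image)
  ultimately show ?thesis unfolding has_copy_def by blast
qed

lemma has_copy_Un:
  assumes "has_copy G1 H1" "has_copy G2 H2"
    and "\<Union>G1 \<inter> \<Union>G2 = {}" "\<Union>H1 \<inter> \<Union>H2 = {}"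
  shows "has_copy (G1 \<union> G2) (H1 \<union> H2)"
proof -
  obtain f1 where f1: "inj_on f1 (\<Union>G1)" "\<forall>e\<in>G1. f1 ` e \<in> H1"
    using assms(1) unfolding has_copy_def by blast
  obtain f2 where f2: "inj_on f2 (\<Union>G2)" "\<forall>e\<in>G2. f2 ` e \<in> H2"
    using assms(2) unfolding has_copy_def by blast
  define f where "f x = (if x \<in> \<Union>G1 then f1 x else f2 x)" for x
  have f_G1: "f x = f1 x" if "x \<in> \<Union>G1" for x
    using that unfolding f_def by simp
  have f_G2: "f x = f2 x" if "x \<in> \<Union>G2" for x
    using that assms(3) unfolding f_def by auto
  have f_edge_G1: "f ` e = f1 ` e" if "e \<in> G1" for e
    using that f_G1 by (intro image_cong) blast+
  have f_edge_G2: "f ` e = f2 ` e" if "e \<in> G2" for e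
    using that f_G2 by (intro image_cong) blast+
  have "inj_on f (\<Union>G1)" using f1(1) f_G1 inj_on_cong by blast
  moreover have "inj_on f (\<Union>G2)" using f2(1) f_G2 inj_on_cong by blast
  moreover have "f ` \<Union>G1 \<subseteq> \<Union>H1" "f ` \<Union>G2 \<subseteq> \<Union>H2"
    unfolding image_Union using f1(2) f2(2) f_edge_G1 f_edge_G2 by auto
  ultimately have "inj_on f (\<Union>(G1 \<union> G2))"
    using assms(4) unfolding Union_Un_distrib inj_on_Un by blast
  moreover have "\<forall>e\<in>G1 \<union> G2. f ` e \<in> H1 \<union> H2"
    using f1(2) f2(2) f_edge_G1 f_edge_G2 by auto
  ultimately show ?thesis unfolding has_copy_def by blast
qed

lemma has_copy_card_le:
  assumes "has_copy G H" "finite H"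
  shows "card G \<le> card H"
proof -
  obtain f where f: "inj_on f (\<Union>G)" "\<forall>e\<in>G. f ` e \<in> H"
    using assms(1) unfolding has_copy_def by blast
  have "inj_on ((`) f) G" using f(1) by (rule inj_on_image)
  moreover have "(`) f ` G \<subseteq> H" using f(2) by auto
  ultimately show ?thesis using card_inj_on_le assms(2) by blast
qed

lemma simple_graph_finite_vertices: "simple_graph F \<Longrightarrow> finite (\<Union>F)"
  unfolding simple_graph_def by (metis card.infinite finite_Union zero_neq_numeral)

lemma simple_graph_image:
  assumes "simple_graph F" "inj_on h (\<Union>F)"
  shows "simple_graph ((`) h ` F)"
proof -
  have "card (h ` e) = card e" if "e \<in> F" for e
    using that assms(2) by (meson Union_upper card_image inj_on_subset)
  then show ?thesis using assms(1) unfolding simple_graph_def by auto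
qed

lemma simple_graph_nat_copy:
  fixes G :: "'a set set"
  assumes "simple_graph G"
  obtains F :: "nat set set" where "simple_graph F" "card F = card G" "has_copy G F"
proof -
  obtain g :: "'a \<Rightarrow> nat" where g: "inj_on g (\<Union>G)"
    using finite_imp_inj_to_nat_seg[OF simple_graph_finite_vertices[OF assms]] by blast
  have "card ((`) g ` G) = card G" using card_image[OF inj_on_image[OF g]] .
  moreover have "has_copy G ((`) g ` G)" unfolding has_copy_def using g by blast
  ultimately show ?thesis using that simple_graph_image[OF assms g] by blast
qed

lemma Union_matching: "\<Union>(matching t) = {..<2*t}"
proof
  show "\<Union>(matching t) \<subseteq> {..<2*t}" by (auto simp: matching_def)
next
  show "{..<2*t} \<subseteq> \<Union>(matching t)"
  proof
    fix x assume "x \<in> {..<2*t}"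
    then have "{2*(x div 2), 2*(x div 2)+1} \<in> matching t"
      unfolding matching_def by auto
    moreover have "x \<in> {2*(x div 2), 2*(x div 2)+1}" by auto
    ultimately show "x \<in> \<Union>(matching t)" by blast
  qed
qed

lemma matching_add: "matching (s + t) = matching s \<union> (`) ((+) (2*s)) ` matching t"
proof (intro equalityI subsetI)
  fix e assume "e \<in> matching (s + t)"
  then obtain i where e: "e = {2*i, 2*i+1}" "i < s + t" unfolding matching_def by blast
  show "e \<in> matching s \<union> (`) ((+) (2*s)) ` matching t"
  proof (cases "i < s")
    case True
    then show ?thesis using e unfolding matching_def by blast
  next
    case False
    then have "e = (+) (2*s) ` {2*(i-s), 2*(i-s)+1}" using e(1) by auto
    moreover have "{2*(i-s), 2*(i-s)+1} \<in> matching t" using False e(2) unfolding matching_def by auto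
    ultimately show ?thesis by blast
  qed
next
  fix e assume "e \<in> matching s \<union> (`) ((+) (2*s)) ` matching t"
  then show "e \<in> matching (s + t)"
  proof
    assume "e \<in> matching s"
    then show ?thesis unfolding matching_def by auto
  next
    assume "e \<in> (`) ((+) (2*s)) ` matching t"
    then obtain j where "e = {2*(s+j), 2*(s+j)+1}" "s + j < s + t" unfolding matching_def by auto
    then show ?thesis unfolding matching_def by blast
  qed
qed

lemma matching_one: "matching 1 = {{0, 1}}"
  unfolding matching_def by auto

lemma has_copy_matching_add:
  assumes "has_copy (matching s) R1" "has_copy (matching t) R2" "\<Union>R1 \<inter> \<Union>R2 = {}"
  shows "has_copy (matching (s + t)) (R1 \<union> R2)"
proof -
  have "has_copy ((`) ((+) (2*s)) ` matching t) R2"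
    using assms(2) by (rule has_copy_of_image) simp
  moreover have "\<Union>(matching s) \<inter> \<Union>((`) ((+) (2*s)) ` matching t) = {}"
    by (auto simp: Union_matching simp flip: image_Union)
  ultimately show ?thesis
    unfolding matching_add using has_copy_Un assms(1,3) by blast
qed

lemma has_copy_matching_one_iff:
  assumes "\<forall>e\<in>R. card e = 2"
  shows "has_copy (matching 1) R \<longleftrightarrow> R \<noteq> {}"
proof
  show "has_copy (matching 1) R \<Longrightarrow> R \<noteq> {}"
    unfolding has_copy_def matching_one by auto
next
  assume "R \<noteq> {}"
  then obtain e where "e \<in> R" by blast
  moreover obtain x y where xy: "e = {x, y}" "x \<noteq> y"
    using assms \<open>e \<in> R\<close> card_2_iff by metis
  define f where "f n = (if n = 0 then x else y)" for n :: nat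
  have "inj_on f {0, 1}" "f ` {0, 1} = e" unfolding f_def using xy by auto
  ultimately show "has_copy (matching 1) R" unfolding has_copy_def matching_one by auto
qed

lemma arrows_image:
  assumes "arrows F M G" "inj (h :: nat \<Rightarrow> nat)"
  shows "arrows ((`) h ` F) M G"
  unfolding arrows_def
proof (intro allI impI)
  fix R assume R: "R \<subseteq> (`) h ` F"
  define R' where "R' = {e \<in> F. h ` e \<in> R}"
  have R_eq: "R = (`) h ` R'" using R unfolding R'_def by auto
  have "inj ((`) h)" using inj_on_image[of h UNIV] assms(2) by simp
  then have diff_eq: "(`) h ` F - (`) h ` R' = (`) h ` (F - R')" by (simp add: image_set_diff)
  have "R' \<subseteq> F" unfolding R'_def by blast
  then have "has_copy M R' \<or> has_copy G (F - R')"
    using assms(1) unfolding arrows_def by blast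
  then have "has_copy M ((`) h ` R') \<or> has_copy G ((`) h ` (F - R'))"
    using has_copy_image[OF _ assms(2), of M R'] has_copy_image[OF _ assms(2), of G "F - R'"]
    by blast
  then show "has_copy M R \<or> has_copy G ((`) h ` F - R)"
    by (simp only: R_eq diff_eq)
qed

lemma arrows_matching_Un:
  assumes "arrows F1 (matching s) G" "arrows F2 (matching t) G" "\<Union>F1 \<inter> \<Union>F2 = {}"
  shows "arrows (F1 \<union> F2) (matching (s + t)) G"
  unfolding arrows_def
proof (intro allI impI)
  fix R assume "R \<subseteq> F1 \<union> F2"
  have "has_copy (matching s) (R \<inter> F1) \<or> has_copy G (F1 - R \<inter> F1)"
    using assms(1) unfolding arrows_def by blast
  moreover have "has_copy (matching t) (R \<inter> F2) \<or> has_copy G (F2 - R \<inter> F2)"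
    using assms(2) unfolding arrows_def by blast
  ultimately consider
      "has_copy G (F1 - R \<inter> F1)" | "has_copy G (F2 - R \<inter> F2)"
    | "has_copy (matching s) (R \<inter> F1)" "has_copy (matching t) (R \<inter> F2)"
    by blast
  then show "has_copy (matching (s + t)) R \<or> has_copy G (F1 \<union> F2 - R)"
  proof cases
    case 1
    then show ?thesis using has_copy_mono[of G _ "F1 \<union> F2 - R"] by blast
  next
    case 2
    then show ?thesis using has_copy_mono[of G _ "F1 \<union> F2 - R"] by blast
  next
    case 3
    moreover have "\<Union>(R \<inter> F1) \<inter> \<Union>(R \<inter> F2) = {}" using assms(3) by blast
    ultimately have "has_copy (matching (s + t)) (R \<inter> F1 \<union> R \<inter> F2)"
      by (rule has_copy_matching_add)
    then show ?thesis using has_copy_mono[of "matching (s + t)" _ R] by blast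
  qed
qed

lemma arrows_matching_add:
  assumes "simple_graph F1" "arrows F1 (matching s) G" "simple_graph F2" "arrows F2 (matching t) G"
  obtains F where "simple_graph F" "card F \<le> card F1 + card F2" "arrows F (matching (s + t)) G"
proof -
  obtain N where N: "\<forall>x\<in>\<Union>F1. x < N"
    using simple_graph_finite_vertices[OF assms(1)] finite_nat_set_iff_bounded by auto
  define F2' where "F2' = (`) ((+) N) ` F2"
  have simple: "simple_graph F2'" unfolding F2'_def by (rule simple_graph_image[OF assms(3)]) simp
  have card: "card F2' = card F2" unfolding F2'_def by (rule card_image[OF inj_on_image]) simp
  have "arrows F2' (matching t) G" unfolding F2'_def by (rule arrows_image[OF assms(4)]) simp
  moreover have "\<Union>F1 \<inter> \<Union>F2' = {}" using N unfolding F2'_def by fastforce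
  ultimately have "arrows (F1 \<union> F2') (matching (s + t)) G" by (rule arrows_matching_Un[OF assms(2)])
  moreover have "simple_graph (F1 \<union> F2')" using assms(1) simple by (auto simp: simple_graph_def)
  moreover have "card (F1 \<union> F2') \<le> card F1 + card F2" using card_Un_le[of F1 F2'] card by simp
  ultimately show ?thesis using that by blast
qed

lemma arrows_matching_one_iff:
  assumes "simple_graph F"
  shows "arrows F (matching 1) G \<longleftrightarrow> has_copy G F"
proof -
  have "has_copy (matching 1) R \<longleftrightarrow> R \<noteq> {}" if "R \<subseteq> F" for R
    using that assms by (intro has_copy_matching_one_iff) (auto simp: simple_graph_def)
  then show ?thesis unfolding arrows_def by (metis Diff_empty empty_subsetI)
qed

lemma exists_arrows_matching:
  assumes "simple_graph G"
  shows "\<exists>F. simple_graph F \<and> arrows F (matching t) G"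
proof (induction t)
  case 0
  have "arrows {} (matching 0) G" unfolding arrows_def has_copy_def matching_def by auto
  then show ?case by (auto simp: simple_graph_def)
next
  case (Suc t)
  then obtain F1 where "simple_graph F1" "arrows F1 (matching t) G" by blast
  moreover obtain F2 where "simple_graph F2" "arrows F2 (matching 1) G"
    using simple_graph_nat_copy[OF assms] arrows_matching_one_iff by metis
  ultimately show ?case using arrows_matching_add[of F1 t G F2 1] by auto
qed

lemma size_ramsey_le:
  "simple_graph F \<Longrightarrow> arrows F M G \<Longrightarrow> size_ramsey M G \<le> card F"
  unfolding size_ramsey_def by (auto intro: Least_le)

lemma size_ramsey_attained:
  assumes "simple_graph F" "arrows F M G"
  obtains F' where "simple_graph F'" "card F' = size_ramsey M G" "arrows F' M G"
  using that LeastI_ex[of "\<lambda>m. \<exists>F. simple_graph F \<and> card F = m \<and> arrows F M G"] assms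
  unfolding size_ramsey_def by blast

lemma size_ramsey_matching_one:
  assumes "simple_graph G"
  shows "size_ramsey (matching 1) G = card G"
proof (rule antisym)
  obtain F :: "nat set set" where F: "simple_graph F" "card F = card G" "has_copy G F"
    using simple_graph_nat_copy[OF assms] .
  then have arrows_F: "arrows F (matching 1) G" using arrows_matching_one_iff by blast
  then show "size_ramsey (matching 1) G \<le> card G" using size_ramsey_le F by metis
  obtain F' where F': "simple_graph F'" "card F' = size_ramsey (matching 1) G" "arrows F' (matching 1) G"
    using size_ramsey_attained[OF F(1) arrows_F] .
  then have "has_copy G F'" using arrows_matching_one_iff by blast
  then show "card G \<le> size_ramsey (matching 1) G"
    using has_copy_card_le F'(1,2) by (metis simple_graph_def)
qed

lemma size_ramsey_matching_add:
  assumes "simple_graph G"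
  shows "size_ramsey (matching (s + t)) G \<le> size_ramsey (matching s) G + size_ramsey (matching t) G"
proof -
  obtain F1 where F1: "simple_graph F1" "card F1 = size_ramsey (matching s) G" "arrows F1 (matching s) G"
    using exists_arrows_matching[OF assms] size_ramsey_attained by metis
  obtain F2 where F2: "simple_graph F2" "card F2 = size_ramsey (matching t) G" "arrows F2 (matching t) G"
    using exists_arrows_matching[OF assms] size_ramsey_attained by metis
  obtain F where "simple_graph F" "card F \<le> card F1 + card F2" "arrows F (matching (s + t)) G"
    using arrows_matching_add[OF F1(1,3) F2(1,3)] .
  then show ?thesis using size_ramsey_le F1(2) F2(2) by fastforce
qed

lemma subadditive_mult_add_le:
  fixes u :: "nat \<Rightarrow> real"
  assumes "\<And>m n. u (m + n) \<le> u m + u n"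
  shows "u (q * k + r) \<le> real q * u k + u r"
proof (induction q)
  case 0
  then show ?case by simp
next
  case (Suc q)
  have "u (Suc q * k + r) \<le> u k + u (q * k + r)"
    using assms[of k "q * k + r"] by (simp add: add.assoc)
  also have "\<dots> \<le> real (Suc q) * u k + u r" using Suc by (simp add: algebra_simps)
  finally show ?case .
qed

lemma subadditive_quotient_le:
  fixes u :: "nat \<Rightarrow> real"
  assumes nonneg: "\<And>n. 0 \<le> u n" and subadd: "\<And>m n. u (m + n) \<le> u m + u n"
    and "k \<ge> 1" "n \<ge> 1"
  shows "u n / n \<le> u k / k + (\<Sum>r<k. u r) / n"
proof -
  define q where "q = n div k"
  define r where "r = n mod k"
  have n_eq: "n = q * k + r" unfolding q_def r_def by simp
  have "r < k" unfolding r_def using \<open>k \<ge> 1\<close> by simp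
  then have "u r \<le> (\<Sum>r<k. u r)" using nonneg by (intro member_le_sum) auto
  then have "u n \<le> real q * u k + (\<Sum>r<k. u r)"
    using subadditive_mult_add_le[OF subadd, of q k r] n_eq by simp
  then have "u n / n \<le> real q * u k / n + (\<Sum>r<k. u r) / n"
    by (simp add: add_divide_distrib[symmetric] divide_right_mono)
  also have "real q * u k / n \<le> u k / k"
  proof -
    have "real q * real k \<le> real n" using n_eq by (metis le_add1 of_nat_le_iff of_nat_mult)
    then have "real q * real k * u k \<le> real n * u k" by (rule mult_right_mono) (rule nonneg)
    then show ?thesis using assms(3,4) by (simp add: field_simps)
  qed
  finally show ?thesis by simp
qed

lemma fekete_subadditive:
  fixes u :: "nat \<Rightarrow> real"
  assumes nonneg: "\<And>n. 0 \<le> u n" and subadd: "\<And>m n. u (m + n) \<le> u m + u n"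
  shows "(\<lambda>n. u n / n) \<longlonglongrightarrow> (INF n\<in>{1..}. u n / n)"
proof -
  have bdd: "bdd_below ((\<lambda>n. u n / n) ` {1..})"
    by (rule bdd_belowI2[of _ 0]) (simp add: nonneg)
  show ?thesis
  proof (rule order_tendstoI)
    fix a assume "a < (INF n\<in>{1..}. u n / n)"
    then have "a < u n / n" if "n \<ge> 1" for n
      using cINF_lower[OF bdd, of n] that by simp
    then show "\<forall>\<^sub>F n in sequentially. a < u n / n"
      unfolding eventually_sequentially by blast
  next
    fix a assume "(INF n\<in>{1..}. u n / n) < a"
    then obtain k where k: "k \<ge> 1" "u k / k < a"
      using cINF_less_iff[OF _ bdd] by auto
    have "(\<lambda>n. (\<Sum>r<k. u r) / real n) \<longlonglongrightarrow> 0" by (rule lim_const_over_n)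
    then have "\<forall>\<^sub>F n in sequentially. (\<Sum>r<k. u r) / n < a - u k / k"
      using k(2) by (intro order_tendstoD(2)) auto
    then show "\<forall>\<^sub>F n in sequentially. u n / n < a"
      using eventually_ge_at_top[of 1]
    proof eventually_elim
      case (elim n)
      then show ?case using subadditive_quotient_le[OF nonneg subadd k(1), of n] by simp
    qed
  qed
qed

lemma subadditive_le_linear:
  fixes a :: "nat \<Rightarrow> nat"
  assumes "\<And>s t. a (s + t) \<le> a s + a t" "t \<ge> 1"
  shows "a t \<le> t * a 1"
  using assms(2)
proof (induction t rule: dec_induct)
  case (step t)
  then show ?case using assms(1)[of t 1] by simp
qed simp

lemma subadditive_normalized_limit:
  fixes a :: "nat \<Rightarrow> nat"
  assumes subadd: "\<And>s t. a (s + t) \<le> a s + a t" and pos: "a 1 > 0"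
  defines "q \<equiv> \<lambda>t. real (a t) / (real t * real (a 1))"
  shows "q \<longlonglongrightarrow> (INF t\<in>{1..}. q t)"
    and "\<And>t. t \<ge> 1 \<Longrightarrow> (INF t\<in>{1..}. q t) \<le> q t"
    and "0 \<le> (INF t\<in>{1..}. q t)" "(INF t\<in>{1..}. q t) \<le> 1"
    and "(INF t\<in>{1..}. q t) = 1 \<longleftrightarrow> (\<forall>t\<ge>1. a t = t * a 1)"
proof -
  have q_eq: "q t = (real (a t) / real (a 1)) / real t" for t
    unfolding q_def by simp
  have bdd: "bdd_below (q ` {1..})"
    by (rule bdd_belowI2[of _ 0]) (simp add: q_def)
  have "real (a (s + t)) / real (a 1) \<le> real (a s) / real (a 1) + real (a t) / real (a 1)" for s t
  proof -
    have "real (a (s + t)) \<le> real (a s) + real (a t)" using subadd[of s t] by (simp flip: of_nat_add)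
    then show ?thesis by (simp add: divide_right_mono flip: add_divide_distrib)
  qed
  then show "q \<longlonglongrightarrow> (INF t\<in>{1..}. q t)"
    unfolding q_eq by (intro fekete_subadditive) simp_all
  show lower: "(INF t\<in>{1..}. q t) \<le> q t" if "t \<ge> 1" for t
    using bdd that by (intro cINF_lower) auto
  show "0 \<le> (INF t\<in>{1..}. q t)"
    by (intro cINF_greatest) (auto simp: q_def)
  show "(INF t\<in>{1..}. q t) \<le> 1"
    using lower[of 1] pos by (simp add: q_def)
  have q_le_1: "q t \<le> 1" if "t \<ge> 1" for t
  proof -
    have "real (a t) \<le> real t * real (a 1)"
      using subadditive_le_linear[OF subadd that] by (simp flip: of_nat_mult)
    then show ?thesis unfolding q_def using pos that by (simp add: divide_le_eq_1)
  qed
  have q_eq_1_iff: "q t = 1 \<longleftrightarrow> a t = t * a 1" if "t \<ge> 1" for t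
    unfolding q_def using pos that by (simp add: divide_eq_1_iff flip: of_nat_mult) (rule eq_commute)
  show "(INF t\<in>{1..}. q t) = 1 \<longleftrightarrow> (\<forall>t\<ge>1. a t = t * a 1)"
  proof
    assume "(INF t\<in>{1..}. q t) = 1"
    then show "\<forall>t\<ge>1. a t = t * a 1"
      using lower q_le_1 q_eq_1_iff by (metis order_antisym)
  next
    assume "\<forall>t\<ge>1. a t = t * a 1"
    then have "q t = 1" if "t \<ge> 1" for t using q_eq_1_iff that by blast
    then have "(INF t\<in>{1..}. q t) = (INF t\<in>{1::nat..}. 1::real)"
      by (intro INF_cong) auto
    then show "(INF t\<in>{1..}. q t) = 1" by simp
  qed
qed

theorem corollary2p4:
  fixes G :: "'a set set"
  assumes "simple_graph G" and "G \<noteq> {}"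
  shows "\<exists>L::real.
     ((\<lambda>t. real (size_ramsey (matching t) G) / (real t * real (size_ramsey (matching 1) G)))
        \<longlonglongrightarrow> L)
   \<and> L = (INF t\<in>{1::nat..}. real (size_ramsey (matching t) G) / (real t * real (card G)))
   \<and> 0 \<le> L \<and> L \<le> 1
   \<and> (L = 1 \<longleftrightarrow> (\<forall>t\<ge>1. size_ramsey (matching t) G = t * card G))
   \<and> (\<forall>t::nat\<ge>1. L \<le> real (size_ramsey (matching t) G) / (real t * real (card G)))"
proof -
  let ?a = "\<lambda>t. size_ramsey (matching t) G"
  have a_1: "?a 1 = card G" by (rule size_ramsey_matching_one[OF assms(1)])
  with assms have a_1_pos: "?a 1 > 0" by (simp add: simple_graph_def card_gt_0_iff)
  show ?thesis
    unfolding a_1[symmetric]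
    using subadditive_normalized_limit[of ?a, OF size_ramsey_matching_add[OF assms(1)] a_1_pos]
    by blast
qed

end
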